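(* Let $\mathcal{G}_{\curlywedge}=(G,o,\curlywedge,R_1,\ldots,R_n)$ be a functional Menger $\curlywedge$-algebra of rank $n$ and let $H$ be a nonempty subset of $G$. Then $H$ is a stabilizer of $\mathcal{G}_{\curlywedge}$ if and only if: (1) $H$ is quasi-stable, $\curlywedge$-stable and $v$-unitary; (2) there exists a subset $U\subseteq G$ with $H\subseteq U$, $R_iU\subseteq H$ and $R_i(G\setminus U)\subseteq G\setminus U$ for every $i\in\{1,\ldots,n\}$, such that (3) for all $x,y\in G$: if $x\in U$ and $y\in H$ then $y[R_1x\ldots R_nx]\in H$; and if $x\in U$ and $y\in U$ then $y[R_1x\ldots R_nx]\in U$.
   Context: A functional Menger system of rank $n$ is a nonempty set $G$ with an $(n+1)$-ary operation $o\colon(x_0,x_1,\ldots,x_n)\mapsto x_0[x_1\ldots x_n]$ and unary operations $R_1,\ldots,R_n$ satisfying, for all $i,k\in\{1,\ldots,n\}$ and all elements: (A1) $x[y_1\ldots y_n][z_1\ldots z_n]=x[y_1[z_1\ldots z_n]\ldots y_n[z_1\ldots z_n]]$; (A2) $x[R_1x\ldots R_nx]=x$; (A3) $x[\bar u\,|_iz][R_1y\ldots R_ny]=x[\bar u\,|_iz[R_1y\ldots R_ny]]$; (A4) $R_ix[R_1y\ldots R_ny]=(R_ix)[R_1y\ldots R_ny]$; (A5) $x[R_1y\ldots R_ny][R_1z\ldots R_nz]=x[R_1z\ldots R_nz][R_1y\ldots R_ny]$; (A6) $R_ix[y_1\ldots y_n]=R_i(R_kx)[y_1\ldots y_n]$;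 (A7) $(R_ix)[y_1\ldots y_n]=y_i[R_1(x[y_1\ldots y_n])\ldots R_n(x[y_1\ldots y_n])]$. Here $x[\bar u\,|_iz]$ denotes $x[u_1\ldots u_{i-1}\,z\,u_{i+1}\ldots u_n]$, and $R_ix[\ldots]$ means $R_i(x[\ldots])$. A functional Menger $\curlywedge$-algebra of rank $n$ is an algebra $(G,o,\curlywedge,R_1,\ldots,R_n)$ such that $(G,o,R_1,\ldots,R_n)$ is a functional Menger system of rank $n$, $(G,\curlywedge)$ is a semilattice, and (A8) $x\curlywedge y[R_1z\ldots R_nz]=(x\curlywedge y)[R_1z\ldots R_nz]$; (A9) $x\curlywedge y=x[R_1(x\curlywedge y)\ldots R_n(x\curlywedge y)]$; (A10) $(x\curlywedge y)[z_1\ldots z_n]=x[z_1\ldots z_n]\curlywedge y[z_1\ldots z_n]$. For a set $A$, $\mathcal F(A^n,A)$ is the set of partial maps $A^n\to A$ (viewed as subsets of $A^n\times A$). The Menger composition $f[g_1\ldots g_n]$ is the partial function $\bar a\mapsto f(g_1(\bar a),\ldots,g_n(\bar a))$ (defined exactly when the right side is defined), and $\mathcal R_if$ is the partial function with the same domain as $f$ given by $(a_1,\ldots,a_n)\mapsto a_i$. A representation of $\mathcal G_\curlywedge$ by $n$-place functions on a set $A$ is a map $P\colon G\to\mathcal F(A^n,A)$ with $P(x[y_1\ldots y_n])=P(x)[P(y_1)\ldots P(y_n)]$, $P(R_ix)=\mathcal R_iP(x)$ and $P(x\curlywedge y)=P(x)\cap P(y)$ (set-theoretic intersection). A nonempty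 $H\subseteq G$ is a stabilizer of $\mathcal G_\curlywedge$ if there exist such a representation $P$ on some set $A$ and a point $a\in A$ with $H=\{g\in G: P(g)(a,\ldots,a)=a\}$. A nonempty $H\subseteq G$ is quasi-stable if $x\in H\Rightarrow x[x\ldots x]\in H$; $\curlywedge$-stable if $x,y\in H\Rightarrow x\curlywedge y\in H$; $v$-unitary if $x[y_1\ldots y_n]\in H$ and $y_1,\ldots,y_n\in H$ imply $x\in H$. *)

theory Defs
  imports Main
begin

text \<open>The carrier G of the algebra is the whole type 'a.
 The (n+1)-ary operation o is  mop :: 'a => 'a list => 'a, applied to lists of
 length n:  x[y_1 ... y_n] = mop x [y_1,...,y_n]  (values on lists of other lengths
 are irrelevant). The unary operations R_1..R_n are  R i  for  i in {1..n}.\<close>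

definition Rs :: "nat \<Rightarrow> (nat \<Rightarrow> 'a \<Rightarrow> 'a) \<Rightarrow> 'a \<Rightarrow> 'a list" where
  "Rs n R x = map (\<lambda>i. R i x) [1..<Suc n]"

definition functional_menger_system ::
  "nat \<Rightarrow> ('a \<Rightarrow> 'a list \<Rightarrow> 'a) \<Rightarrow> (nat \<Rightarrow> 'a \<Rightarrow> 'a) \<Rightarrow> bool" where
  "functional_menger_system n mop R \<longleftrightarrow>
     \<comment> \<open>(A1)\<close>
     (\<forall>x ys zs. length ys = n \<longrightarrow> length zs = n \<longrightarrow>
        mop (mop x ys) zs = mop x (map (\<lambda>y. mop y zs) ys)) \<and>
     \<comment> \<open>(A2)\<close>
     (\<forall>x. mop x (Rs n R x) = x) \<and>
     \<comment> \<open>(A3)\<close>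
     (\<forall>x us z y i. length us = n \<longrightarrow> 1 \<le> i \<longrightarrow> i \<le> n \<longrightarrow>
        mop (mop x (us[i - 1 := z])) (Rs n R y) = mop x (us[i - 1 := mop z (Rs n R y)])) \<and>
     \<comment> \<open>(A4)\<close>
     (\<forall>x y i. 1 \<le> i \<longrightarrow> i \<le> n \<longrightarrow>
        R i (mop x (Rs n R y)) = mop (R i x) (Rs n R y)) \<and>
     \<comment> \<open>(A5)\<close>
     (\<forall>x y z. mop (mop x (Rs n R y)) (Rs n R z) = mop (mop x (Rs n R z)) (Rs n R y)) \<and>
     \<comment> \<open>(A6)\<close>
     (\<forall>x ys i k. length ys = n \<longrightarrow> 1 \<le> i \<longrightarrow> i \<le> n \<longrightarrow> 1 \<le> k \<longrightarrow> k \<le> n \<longrightarrow>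
        R i (mop x ys) = R i (mop (R k x) ys)) \<and>
     \<comment> \<open>(A7)\<close>
     (\<forall>x ys i. length ys = n \<longrightarrow> 1 \<le> i \<longrightarrow> i \<le> n \<longrightarrow>
        mop (R i x) ys = mop (ys ! (i - 1)) (Rs n R (mop x ys)))"

definition functional_menger_wedge_algebra ::
  "nat \<Rightarrow> ('a \<Rightarrow> 'a list \<Rightarrow> 'a) \<Rightarrow> ('a \<Rightarrow> 'a \<Rightarrow> 'a) \<Rightarrow> (nat \<Rightarrow> 'a \<Rightarrow> 'a) \<Rightarrow> bool" where
  "functional_menger_wedge_algebra n mop mw R \<longleftrightarrow>
     functional_menger_system n mop R \<and>
     \<comment> \<open>(G, mw) is a semilattice\<close>
     (\<forall>x y z. mw (mw x y) z = mw x (mw y z)) \<and>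
     (\<forall>x y. mw x y = mw y x) \<and>
     (\<forall>x. mw x x = x) \<and>
     \<comment> \<open>(A8)\<close>
     (\<forall>x y z. mw x (mop y (Rs n R z)) = mop (mw x y) (Rs n R z)) \<and>
     \<comment> \<open>(A9)\<close>
     (\<forall>x y. mw x y = mop x (Rs n R (mw x y))) \<and>
     \<comment> \<open>(A10)\<close>
     (\<forall>x y zs. length zs = n \<longrightarrow> mop (mw x y) zs = mw (mop x zs) (mop y zs))"

text \<open>Partial n-place functions on a set A: partial maps from lists of length n
 over A to A (the graph of f is {(xs, v). f xs = Some v}).\<close>

definition is_nfun :: "nat \<Rightarrow> 'b set \<Rightarrow> ('b list \<Rightarrow> 'b option) \<Rightarrow> bool" where
  "is_nfun n A f \<longleftrightarrow> dom f \<subseteq> {xs. length xs = n \<and> set xs \<subseteq> A} \<and> ran f \<subseteq> A"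

definition fcomp :: "('b list \<Rightarrow> 'b option) \<Rightarrow> ('b list \<Rightarrow> 'b option) list \<Rightarrow> ('b list \<Rightarrow> 'b option)" where
  "fcomp f gs = (\<lambda>xs. if (\<forall>g\<in>set gs. g xs \<noteq> None)
                      then f (map (\<lambda>g. the (g xs)) gs) else None)"

definition fR :: "nat \<Rightarrow> ('b list \<Rightarrow> 'b option) \<Rightarrow> ('b list \<Rightarrow> 'b option)" where
  "fR i f = (\<lambda>xs. if f xs = None then None else Some (xs ! (i - 1)))"

definition finter :: "('b list \<Rightarrow> 'b option) \<Rightarrow> ('b list \<Rightarrow> 'b option) \<Rightarrow> ('b list \<Rightarrow> 'b option)" where
  "finter f g = (\<lambda>xs. if f xs = g xs then f xs else None)"

definition is_representation ::
  "nat \<Rightarrow> ('a \<Rightarrow> 'a list \<Rightarrow> 'a) \<Rightarrow> ('a \<Rightarrow> 'a \<Rightarrow> 'a) \<Rightarrow> (nat \<Rightarrow> 'a \<Rightarrow> 'a)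
    \<Rightarrow> 'b set \<Rightarrow> ('a \<Rightarrow> ('b list \<Rightarrow> 'b option)) \<Rightarrow> bool" where
  "is_representation n mop mw R A P \<longleftrightarrow>
     (\<forall>g. is_nfun n A (P g)) \<and>
     (\<forall>x ys. length ys = n \<longrightarrow> P (mop x ys) = fcomp (P x) (map P ys)) \<and>
     (\<forall>i x. 1 \<le> i \<longrightarrow> i \<le> n \<longrightarrow> P (R i x) = fR i (P x)) \<and>
     (\<forall>x y. P (mw x y) = finter (P x) (P y))"

text \<open>Stabilizer, relative to the type 'b from which the representing set A is drawn.\<close>
definition is_stabilizer ::
  "'b itself \<Rightarrow> nat \<Rightarrow> ('a \<Rightarrow> 'a list \<Rightarrow> 'a) \<Rightarrow> ('a \<Rightarrow> 'a \<Rightarrow> 'a) \<Rightarrow> (nat \<Rightarrow> 'a \<Rightarrow> 'a)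
    \<Rightarrow> 'a set \<Rightarrow> bool" where
  "is_stabilizer _ n mop mw R H \<longleftrightarrow> H \<noteq> {} \<and>
     (\<exists>(A :: 'b set) P a. a \<in> A \<and> is_representation n mop mw R A P \<and>
        H = {g. P g (replicate n a) = Some a})"

definition quasi_stable :: "nat \<Rightarrow> ('a \<Rightarrow> 'a list \<Rightarrow> 'a) \<Rightarrow> 'a set \<Rightarrow> bool" where
  "quasi_stable n mop H \<longleftrightarrow> H \<noteq> {} \<and> (\<forall>x\<in>H. mop x (replicate n x) \<in> H)"

definition wedge_stable :: "('a \<Rightarrow> 'a \<Rightarrow> 'a) \<Rightarrow> 'a set \<Rightarrow> bool" where
  "wedge_stable mw H \<longleftrightarrow> H \<noteq> {} \<and> (\<forall>x\<in>H. \<forall>y\<in>H. mw x y \<in> H)"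

definition v_unitary :: "nat \<Rightarrow> ('a \<Rightarrow> 'a list \<Rightarrow> 'a) \<Rightarrow> 'a set \<Rightarrow> bool" where
  "v_unitary n mop H \<longleftrightarrow> H \<noteq> {} \<and>
     (\<forall>x ys. length ys = n \<longrightarrow> set ys \<subseteq> H \<longrightarrow> mop x ys \<in> H \<longrightarrow> x \<in> H)"

end

theory Submission
  imports Defs
begin

text \<open>If H is the stabilizer of the point a in a representation P, the conditions hold with
  U = {g. P g is defined at (a, ..., a)}: this is a direct computation with Menger composition and
  the projections R_i.

  Conversely, given H and U, the relation x \<approx> y :\<longleftrightarrow> x \<curlywedge> y \<in> U (in a representation: x and y are
  defined at (a, ..., a) and agree there) is an equivalence relation on U that is compatible with
  superposition, because restricting to the domain of y \<curlywedge> y' turns y and y' into the same element.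
  G acts on the classes of \<approx> by sending (p_1, ..., p_n) to the class of g[q_1 ... q_n] for
  representatives q_i, which is defined iff g[q_1 ... q_n] \<in> U. The set H is one of the classes, and
  v-unitarity together with quasi- and \<curlywedge>-stability make it the stabilizer of that class.\<close>

lemma length_Rs [simp]: "length (Rs n R x) = n"
  by (simp add: Rs_def)

lemma set_Rs: "set (Rs n R x) = (\<lambda>i. R i x) ` {1..n}"
  by (auto simp: Rs_def image_iff)

definition stabilizer_domain ::
  "nat \<Rightarrow> ('a \<Rightarrow> 'a list \<Rightarrow> 'a) \<Rightarrow> (nat \<Rightarrow> 'a \<Rightarrow> 'a) \<Rightarrow> 'a set \<Rightarrow> 'a set \<Rightarrow> bool" where
  "stabilizer_domain n mop R H U \<longleftrightarrow> H \<subseteq> U \<and>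
     (\<forall>i\<in>{1..n}. R i ` U \<subseteq> H \<and> R i ` (- U) \<subseteq> - U) \<and>
     (\<forall>x y. x \<in> U \<and> y \<in> H \<longrightarrow> mop y (Rs n R x) \<in> H) \<and>
     (\<forall>x y. x \<in> U \<and> y \<in> U \<longrightarrow> mop y (Rs n R x) \<in> U)"

section \<open>Point stabilizers of representations\<close>

lemma representation_mop_at_fixed_point:
  assumes "is_representation n mop mw R A P" and "length ys = n"
    and "\<forall>y\<in>set ys. P y (replicate n a) = Some a"
  shows "P (mop x ys) (replicate n a) = P x (replicate n a)"
proof -
  have "map (\<lambda>g. the (g (replicate n a))) (map P ys) = map (\<lambda>_. a) ys"
    using assms(3) by simp
  also have "\<dots> = replicate n a"
    using assms(2) by (simp add: map_replicate_const)
  finally have "map (\<lambda>g. the (g (replicate n a))) (map P ys) = replicate n a" .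
  then show ?thesis
    using assms by (simp add: is_representation_def fcomp_def)
qed

lemma representation_R_at_diagonal:
  assumes "is_representation n mop mw R A P" and "1 \<le> i" "i \<le> n"
  shows "P (R i x) (replicate n a) = (if P x (replicate n a) = None then None else Some a)"
  using assms by (simp add: is_representation_def fR_def)

lemma representation_Rs_at_diagonal:
  assumes "is_representation n mop mw R A P" and "P x (replicate n a) \<noteq> None"
  shows "\<forall>y\<in>set (Rs n R x). P y (replicate n a) = Some a"
  using assms by (auto simp: set_Rs representation_R_at_diagonal)

lemma point_stabilizer_conditions:
  assumes rep: "is_representation n mop mw R A P"
    and H_def: "H = {g. P g (replicate n a) = Some a}" and "H \<noteq> {}"
  shows "quasi_stable n mop H" and "wedge_stable mw H" and "v_unitary n mop H"
    and "stabilizer_domain n mop R H {g. P g (replicate n a) \<noteq> None}"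
proof -
  note mop_fixed = representation_mop_at_fixed_point[OF rep]
  show "quasi_stable n mop H"
    using \<open>H \<noteq> {}\<close> mop_fixed[of "replicate n _"] by (auto simp: quasi_stable_def H_def)
  show "wedge_stable mw H"
    using \<open>H \<noteq> {}\<close> rep by (auto simp: wedge_stable_def H_def is_representation_def finter_def)
  show "v_unitary n mop H"
    using \<open>H \<noteq> {}\<close> mop_fixed by (auto simp: v_unitary_def H_def subset_iff)
  show "stabilizer_domain n mop R H {g. P g (replicate n a) \<noteq> None}"
    using mop_fixed[OF _ representation_Rs_at_diagonal[OF rep]]
    by (auto simp: stabilizer_domain_def H_def representation_R_at_diagonal[OF rep] split: if_splits)
qed

section \<open>Functional Menger \<curlywedge>-algebras\<close>

locale menger_wedge_algebra =
  fixes n :: nat and mop :: "'a \<Rightarrow> 'a list \<Rightarrow> 'a" and mw :: "'a \<Rightarrow> 'a \<Rightarrow> 'a"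
    and R :: "nat \<Rightarrow> 'a \<Rightarrow> 'a"
  assumes rank_pos: "1 \<le> n"
    and algebra: "functional_menger_wedge_algebra n mop mw R"
begin

lemma menger_system: "functional_menger_system n mop R"
  using algebra unfolding functional_menger_wedge_algebra_def by (elim conjE)

lemma mop_mop:
  "length ys = n \<Longrightarrow> length zs = n \<Longrightarrow> mop (mop x ys) zs = mop x (map (\<lambda>y. mop y zs) ys)"
  using menger_system unfolding functional_menger_system_def
  by (elim conjE) blast

lemma mop_update_mop_Rs:
  "length us = n \<Longrightarrow> 1 \<le> i \<Longrightarrow> i \<le> n \<Longrightarrow>
    mop (mop x (us[i - 1 := z])) (Rs n R y) = mop x (us[i - 1 := mop z (Rs n R y)])"
  using menger_system unfolding functional_menger_system_def
  by (elim conjE) fast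

lemma R_mop_Rs: "1 \<le> i \<Longrightarrow> i \<le> n \<Longrightarrow> R i (mop x (Rs n R y)) = mop (R i x) (Rs n R y)"
  using menger_system unfolding functional_menger_system_def
  by (elim conjE) fast

lemma R_mop_R:
  "length ys = n \<Longrightarrow> 1 \<le> i \<Longrightarrow> i \<le> n \<Longrightarrow> 1 \<le> k \<Longrightarrow> k \<le> n \<Longrightarrow>
    R i (mop x ys) = R i (mop (R k x) ys)"
  using menger_system unfolding functional_menger_system_def
  by (elim conjE) fast

lemma mop_R:
  "length ys = n \<Longrightarrow> 1 \<le> i \<Longrightarrow> i \<le> n \<Longrightarrow> mop (R i x) ys = mop (ys ! (i - 1)) (Rs n R (mop x ys))"
  using menger_system unfolding functional_menger_system_def
  by (elim conjE) fast

lemma mw_assoc: "mw (mw x y) z = mw x (mw y z)"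
  using algebra unfolding functional_menger_wedge_algebra_def by meson

lemma mw_commute: "mw x y = mw y x"
  using algebra unfolding functional_menger_wedge_algebra_def by meson

lemma mw_idem: "mw x x = x"
  using algebra unfolding functional_menger_wedge_algebra_def by meson

lemma mw_mop_Rs: "mw x (mop y (Rs n R z)) = mop (mw x y) (Rs n R z)"
  using algebra unfolding functional_menger_wedge_algebra_def by meson

lemma mw_eq_mop_Rs: "mw x y = mop x (Rs n R (mw x y))"
  using algebra unfolding functional_menger_wedge_algebra_def by meson

lemma mop_mw: "length zs = n \<Longrightarrow> mop (mw x y) zs = mw (mop x zs) (mop y zs)"
  using algebra unfolding functional_menger_wedge_algebra_def by (elim conjE) simp

lemma mw_absorb: "mw x (mw x y) = mw x y"
  by (simp add: mw_assoc[symmetric] mw_idem)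

lemma mw_mop_Rs_self: "mw x (mop x (Rs n R z)) = mop x (Rs n R z)"
  by (simp add: mw_mop_Rs mw_idem)

lemma R_mop_eq_mop_R_nth:
  assumes "length ys = n" "1 \<le> i" "i \<le> n" "k < n"
  shows "R i (mop x ys) = mop (R i (ys ! k)) (Rs n R (mop x ys))"
proof -
  have "R i (mop x ys) = R i (mop (R (Suc k) x) ys)"
    using R_mop_R[of ys i "Suc k" x] assms by simp
  also have "\<dots> = R i (mop (ys ! k) (Rs n R (mop x ys)))"
    using mop_R[of ys "Suc k"] assms by simp
  also have "\<dots> = mop (R i (ys ! k)) (Rs n R (mop x ys))"
    using R_mop_Rs assms by simp
  finally show ?thesis .
qed

end

section \<open>The representation on the classes of U\<close>

locale stabilizer_candidate = menger_wedge_algebra +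
  fixes H U :: "'a set"
  assumes H_quasi_stable: "quasi_stable n mop H"
    and H_wedge_stable: "wedge_stable mw H"
    and H_v_unitary: "v_unitary n mop H"
    and U_domain: "stabilizer_domain n mop R H U"
begin

lemma H_nonempty: "H \<noteq> {}"
  using H_quasi_stable by (simp add: quasi_stable_def)

lemma mop_replicate_in_H: "x \<in> H \<Longrightarrow> mop x (replicate n x) \<in> H"
  using H_quasi_stable by (simp add: quasi_stable_def)

lemma mw_in_H: "x \<in> H \<Longrightarrow> y \<in> H \<Longrightarrow> mw x y \<in> H"
  using H_wedge_stable by (simp add: wedge_stable_def)

lemma in_H_if_mop_in_H: "length ys = n \<Longrightarrow> set ys \<subseteq> H \<Longrightarrow> mop x ys \<in> H \<Longrightarrow> x \<in> H"
  using H_v_unitary by (simp add: v_unitary_def)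

lemma H_subset_U: "H \<subseteq> U"
  using U_domain by (simp add: stabilizer_domain_def)

lemma R_in_H:
  assumes "1 \<le> i" "i \<le> n" "x \<in> U"
  shows "R i x \<in> H"
proof -
  have "R i ` U \<subseteq> H"
    using U_domain assms(1,2) by (simp add: stabilizer_domain_def)
  then show ?thesis
    using assms(3) by blast
qed

lemma in_U_if_R_in_U:
  assumes "1 \<le> i" "i \<le> n" "R i x \<in> U"
  shows "x \<in> U"
proof -
  have "R i ` (- U) \<subseteq> - U"
    using U_domain assms(1,2) by (simp add: stabilizer_domain_def)
  then show ?thesis
    using assms(3) by blast
qed

lemma mop_Rs_in_H: "x \<in> U \<Longrightarrow> y \<in> H \<Longrightarrow> mop y (Rs n R x) \<in> H"
  using U_domain by (simp add: stabilizer_domain_def)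

lemma mop_Rs_in_U: "x \<in> U \<Longrightarrow> y \<in> U \<Longrightarrow> mop y (Rs n R x) \<in> U"
  using U_domain by (simp add: stabilizer_domain_def)

lemma set_Rs_subset_H: "x \<in> U \<Longrightarrow> set (Rs n R x) \<subseteq> H"
  by (auto simp: set_Rs R_in_H)

lemma in_U_if_R_in_H: "1 \<le> i \<Longrightarrow> i \<le> n \<Longrightarrow> R i x \<in> H \<Longrightarrow> x \<in> U"
  using H_subset_U in_U_if_R_in_U by blast

lemma set_subset_U_if_mop_in_U:
  assumes "length ys = n" and z_in_U: "mop x ys \<in> U"
  shows "set ys \<subseteq> U"
proof
  fix y assume "y \<in> set ys"
  then obtain k where "k < n" "y = ys ! k"
    using assms(1) by (auto simp: in_set_conv_nth)
  then have "R 1 (mop x ys) = mop (R 1 y) (Rs n R (mop x ys))"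
    using R_mop_eq_mop_R_nth assms(1) rank_pos by simp
  moreover have "R 1 (mop x ys) \<in> H"
    using R_in_H rank_pos z_in_U by simp
  ultimately have "R 1 y \<in> H"
    using in_H_if_mop_in_H[OF _ set_Rs_subset_H[OF z_in_U]] by simp
  then show "y \<in> U"
    using in_U_if_R_in_H rank_pos by blast
qed

lemma mop_Rs_in_U_D:
  assumes z_in_U: "mop w (Rs n R v) \<in> U"
  shows "w \<in> U" and "v \<in> U"
proof -
  have "R 1 v \<in> U"
    using set_subset_U_if_mop_in_U[OF _ z_in_U] rank_pos by (auto simp: set_Rs)
  then show v_in_U: "v \<in> U"
    using in_U_if_R_in_U rank_pos by blast
  have "mop (R 1 w) (Rs n R v) \<in> H"
    using R_in_H[OF _ rank_pos z_in_U] R_mop_Rs rank_pos by simp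
  then have "R 1 w \<in> H"
    using in_H_if_mop_in_H[OF _ set_Rs_subset_H[OF v_in_U]] by simp
  then show "w \<in> U"
    using in_U_if_R_in_H rank_pos by blast
qed

lemma mw_in_U_D:
  assumes "mw x y \<in> U"
  shows "x \<in> U" and "y \<in> U"
proof -
  have "z \<in> U" if "mw z w \<in> U" for z w
  proof -
    from that have "mop z (Rs n R (mw z w)) \<in> U"
      by (simp only: mw_eq_mop_Rs[of z w, symmetric])
    then show ?thesis
      by (rule mop_Rs_in_U_D(1))
  qed
  then show "x \<in> U" and "y \<in> U"
    using assms mw_commute by metis+
qed

definition U_equiv :: "'a \<Rightarrow> 'a \<Rightarrow> bool" (infix "\<approx>" 50) where
  "x \<approx> y \<longleftrightarrow> mw x y \<in> U"

lemma U_equiv_in_U: "x \<approx> y \<Longrightarrow> x \<in> U \<and> y \<in> U"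
  unfolding U_equiv_def using mw_in_U_D by blast

lemma U_equiv_refl: "x \<in> U \<Longrightarrow> x \<approx> x"
  by (simp add: U_equiv_def mw_idem)

lemma U_equiv_sym: "x \<approx> y \<Longrightarrow> y \<approx> x"
  by (metis U_equiv_def mw_commute)

lemma U_equiv_trans:
  assumes "x \<approx> y" "y \<approx> z"
  shows "x \<approx> z"
proof -
  have "mw x (mw y z) = mop (mw x y) (Rs n R (mw y z))"
    by (subst mw_eq_mop_Rs[of y z]) (rule mw_mop_Rs)
  then have "mw x (mw y z) \<in> U"
    using mop_Rs_in_U assms unfolding U_equiv_def by simp
  then have "mw y (mw x z) \<in> U"
    by (metis mw_assoc mw_commute)
  then show ?thesis
    unfolding U_equiv_def using mw_in_U_D by blast
qed

lemma U_equiv_mop_Rs: "x \<in> U \<Longrightarrow> z \<in> U \<Longrightarrow> x \<approx> mop x (Rs n R z)"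
  by (simp add: U_equiv_def mw_mop_Rs_self mop_Rs_in_U)

lemma U_equiv_mw: "mw x y \<in> U \<Longrightarrow> x \<approx> mw x y"
  by (simp add: U_equiv_def mw_absorb)

lemma mop_append_U_equiv:
  assumes "length pre + Suc (length post) = n" "y \<approx> y'" and a_in_U: "mop x (pre @ y # post) \<in> U"
  shows "mop x (pre @ y # post) \<approx> mop x (pre @ y' # post)"
proof -
  define d where "d = mw y y'"
  define a where "a = mop x (pre @ y # post)"
  define b where "b = mop x (pre @ y' # post)"
  have d_in_U: "d \<in> U"
    using assms(2) by (simp add: d_def U_equiv_def)
  have "mop y (Rs n R d) = d" "mop y' (Rs n R d) = d"
    using mw_eq_mop_Rs[of y y'] mw_eq_mop_Rs[of y' y] by (simp_all add: d_def mw_commute)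
  moreover have "mop (mop x ((pre @ u # post)[length pre := u])) (Rs n R d) =
      mop x ((pre @ u # post)[length pre := mop u (Rs n R d)])" for u
    using mop_update_mop_Rs[of "pre @ u # post" "Suc (length pre)"] assms(1) by simp
  \<comment> \<open>restricted to the domain of d, both a and b become x[pre, d, post]\<close>
  ultimately have "mop b (Rs n R d) = mop a (Rs n R d)"
    by (simp add: a_def b_def)
  have "mop (mw a b) (Rs n R d) = mw a (mop b (Rs n R d))"
    by (rule mw_mop_Rs[symmetric])
  also have "\<dots> = mw a (mop a (Rs n R d))"
    using \<open>mop b (Rs n R d) = mop a (Rs n R d)\<close> by simp
  also have "\<dots> = mop a (Rs n R d)"
    by (rule mw_mop_Rs_self)
  finally have "mop (mw a b) (Rs n R d) = mop a (Rs n R d)" .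
  moreover have "mop a (Rs n R d) \<in> U"
    using mop_Rs_in_U d_in_U a_in_U by (simp add: a_def)
  ultimately have "mw a b \<in> U"
    using mop_Rs_in_U_D(1) by metis
  then show ?thesis
    by (simp add: U_equiv_def a_def b_def)
qed

lemma mop_U_equiv:
  assumes "list_all2 (\<approx>) ys ys'" "length ys = n" "mop x ys \<in> U"
  shows "mop x ys \<approx> mop x ys'"
proof -
  have "length pre + length ys = n \<Longrightarrow> mop x (pre @ ys) \<in> U \<Longrightarrow>
      mop x (pre @ ys) \<approx> mop x (pre @ ys')" for pre
    using assms(1)
  proof (induction ys ys' arbitrary: pre rule: list_all2_induct)
    case Nil
    then show ?case by (simp add: U_equiv_refl)
  next
    case (Cons y ys y' ys')
    have first: "mop x (pre @ y # ys) \<approx> mop x (pre @ y' # ys)"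
      using mop_append_U_equiv Cons.prems Cons.hyps(1) by simp
    then have "mop x ((pre @ [y']) @ ys) \<in> U"
      using U_equiv_in_U by simp
    then have "mop x ((pre @ [y']) @ ys) \<approx> mop x ((pre @ [y']) @ ys')"
      using Cons.IH[of "pre @ [y']"] Cons.prems(1) by simp
    with first show ?case
      using U_equiv_trans by simp
  qed
  from this[of "[]"] show ?thesis
    using assms(2,3) by simp
qed

text \<open>A class of \<approx> is encoded by a chosen representative, wrapped as a singleton list because
  the theorem asks for a representation on a set of type \<^typ>\<open>'a list\<close>.\<close>

definition class_point :: "'a \<Rightarrow> 'a list" where
  "class_point x = [SOME y. x \<approx> y]"

definition class_points :: "'a list set" where
  "class_points = class_point ` U"

definition class_value :: "'a \<Rightarrow> 'a list option" where
  "class_value x = (if x \<in> U then Some (class_point x) else None)"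

definition class_rep :: "'a \<Rightarrow> 'a list list \<Rightarrow> 'a list option" where
  "class_rep g ps =
     (if length ps = n \<and> set ps \<subseteq> class_points then class_value (mop g (map hd ps)) else None)"

lemma U_equiv_hd_class_point: "x \<in> U \<Longrightarrow> x \<approx> hd (class_point x)"
  unfolding class_point_def by (auto intro: someI U_equiv_refl)

lemma class_point_eq_iff:
  assumes "x \<in> U" "y \<in> U"
  shows "class_point x = class_point y \<longleftrightarrow> x \<approx> y"
proof
  assume "class_point x = class_point y"
  then show "x \<approx> y"
    using U_equiv_hd_class_point assms U_equiv_sym U_equiv_trans by metis
next
  assume "x \<approx> y"
  then have "(\<lambda>z. x \<approx> z) = (\<lambda>z. y \<approx> z)"
    using U_equiv_sym U_equiv_trans by blast
  then show "class_point x = class_point y"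
    by (simp add: class_point_def)
qed

lemma class_point_hd:
  assumes "p \<in> class_points"
  shows "hd p \<in> U" and "class_point (hd p) = p"
proof -
  obtain x where x: "x \<in> U" "p = class_point x"
    using assms by (auto simp: class_points_def)
  then have "x \<approx> hd p"
    using U_equiv_hd_class_point by simp
  then show "hd p \<in> U"
    using U_equiv_in_U by blast
  with \<open>x \<approx> hd p\<close> show "class_point (hd p) = p"
    using x class_point_eq_iff U_equiv_sym by metis
qed

lemma class_points_lists:
  assumes "length ps = n" "set ps \<subseteq> class_points"
  obtains qs where "length qs = n" "set qs \<subseteq> U" "ps = map class_point qs"
proof
  show "length (map hd ps) = n" "set (map hd ps) \<subseteq> U"
    using assms class_point_hd(1) by auto
  show "ps = map class_point (map hd ps)"
    using assms(2) class_point_hd(2) by (simp add: map_idI subset_iff)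
qed

lemma class_value_mop_U_equiv:
  assumes "list_all2 (\<approx>) ys ys'" "length ys = n"
  shows "class_value (mop x ys) = class_value (mop x ys')"
proof -
  have "list_all2 (\<approx>) ys' ys"
    using assms(1) by (auto simp: list_all2_conv_all_nth intro: U_equiv_sym)
  then have "mop x ys \<in> U \<longleftrightarrow> mop x ys' \<in> U"
    using mop_U_equiv assms U_equiv_in_U list_all2_lengthD by metis
  moreover have "mop x ys \<in> U \<Longrightarrow> class_point (mop x ys) = class_point (mop x ys')"
    using mop_U_equiv[OF assms] class_point_eq_iff U_equiv_in_U by blast
  ultimately show ?thesis
    by (simp add: class_value_def)
qed

lemma class_rep_map_class_point:
  assumes "length qs = n" "set qs \<subseteq> U"
  shows "class_rep g (map class_point qs) = class_value (mop g qs)"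
proof -
  have "set (map class_point qs) \<subseteq> class_points"
    using assms(2) by (auto simp: class_points_def)
  then have "class_rep g (map class_point qs) = class_value (mop g (map hd (map class_point qs)))"
    using assms(1) by (simp add: class_rep_def)
  moreover have "list_all2 (\<approx>) (map hd (map class_point qs)) qs"
    using assms(2) U_equiv_hd_class_point U_equiv_sym
    unfolding list_all2_map1 list_all2_same by blast
  ultimately show ?thesis
    using assms(1) class_value_mop_U_equiv[of "map hd (map class_point qs)" qs g] by simp
qed

lemma class_value_mw:
  "class_value (mw u v) = (if class_value u = class_value v then class_value u else None)"
proof (cases "mw u v \<in> U")
  case True
  then have in_U: "u \<in> U" "v \<in> U"
    by (rule mw_in_U_D)+
  have "u \<approx> v" "mw u v \<approx> u"
    using True U_equiv_mw[of u v] U_equiv_sym unfolding U_equiv_def by blast+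
  then have "class_point u = class_point v" "class_point (mw u v) = class_point u"
    using True in_U class_point_eq_iff by blast+
  then show ?thesis
    using True in_U by (simp add: class_value_def)
next
  case False
  then have "u \<in> U \<Longrightarrow> v \<in> U \<Longrightarrow> class_point u \<noteq> class_point v"
    using class_point_eq_iff by (simp add: U_equiv_def)
  then show ?thesis
    using False by (auto simp: class_value_def)
qed

lemma is_nfun_class_rep: "is_nfun n class_points (class_rep g)"
  unfolding is_nfun_def class_rep_def class_value_def class_points_def
  by (auto simp: dom_def ran_def split: if_splits)

lemma class_rep_outside:
  "\<not> (length ps = n \<and> set ps \<subseteq> class_points) \<Longrightarrow> class_rep g ps = None"
  unfolding class_rep_def by auto

lemma class_rep_mop:
  assumes ys: "length ys = n"
  shows "class_rep (mop x ys) = fcomp (class_rep x) (map class_rep ys)"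
proof
  fix ps
  show "class_rep (mop x ys) ps = fcomp (class_rep x) (map class_rep ys) ps"
  proof (cases "length ps = n \<and> set ps \<subseteq> class_points")
    case False
    moreover obtain y where "y \<in> set ys"
      using ys rank_pos by (cases ys) auto
    ultimately show ?thesis
      by (auto simp: fcomp_def class_rep_outside)
  next
    case True
    then obtain qs where qs: "length qs = n" "set qs \<subseteq> U" and ps: "ps = map class_point qs"
      using class_points_lists by blast
    define ws where "ws = map (\<lambda>y. mop y qs) ys"
    have lhs: "class_rep (mop x ys) ps = class_value (mop x ws)"
      using class_rep_map_class_point qs mop_mop ys by (simp add: ps ws_def)
    have args: "class_rep y ps = class_value (mop y qs)" for y
      using class_rep_map_class_point qs by (simp add: ps)
    show ?thesis
    proof (cases "set ws \<subseteq> U")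
      case True
      then have "\<forall>g\<in>set (map class_rep ys). g ps \<noteq> None"
        by (auto simp: args class_value_def ws_def)
      moreover have "map (\<lambda>g. the (g ps)) (map class_rep ys) = map class_point ws"
        using True by (auto simp: args class_value_def ws_def)
      ultimately have "fcomp (class_rep x) (map class_rep ys) ps = class_rep x (map class_point ws)"
        unfolding fcomp_def by (simp only:) (rule if_P)
      also have "\<dots> = class_value (mop x ws)"
        using True ys by (intro class_rep_map_class_point) (simp_all add: ws_def)
      finally show ?thesis
        using lhs by simp
    next
      case False
      then have "\<not> (\<forall>g\<in>set (map class_rep ys). g ps \<noteq> None)"
        by (auto simp: args class_value_def ws_def)
      then have "fcomp (class_rep x) (map class_rep ys) ps = None"
        unfolding fcomp_def by auto
      moreover have "mop x ws \<notin> U"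
        using False set_subset_U_if_mop_in_U[of ws x] ys by (auto simp: ws_def)
      ultimately show ?thesis
        using lhs by (simp add: class_value_def)
    qed
  qed
qed

lemma class_rep_R:
  assumes i: "1 \<le> i" "i \<le> n"
  shows "class_rep (R i x) = fR i (class_rep x)"
proof
  fix ps
  show "class_rep (R i x) ps = fR i (class_rep x) ps"
  proof (cases "length ps = n \<and> set ps \<subseteq> class_points")
    case False
    then show ?thesis
      by (simp add: fR_def class_rep_outside)
  next
    case True
    then obtain qs where qs: "length qs = n" "set qs \<subseteq> U" and ps: "ps = map class_point qs"
      using class_points_lists by blast
    have qi: "qs ! (i - 1) \<in> U"
      using qs i by auto
    have "class_rep (R i x) ps = class_value (mop (qs ! (i - 1)) (Rs n R (mop x qs)))"
      using class_rep_map_class_point qs mop_R i by (simp add: ps)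
    moreover have "class_rep x ps = class_value (mop x qs)"
      using class_rep_map_class_point qs by (simp add: ps)
    moreover have "mop x qs \<in> U \<Longrightarrow>
        class_point (mop (qs ! (i - 1)) (Rs n R (mop x qs))) = class_point (qs ! (i - 1))"
      using U_equiv_mop_Rs qi U_equiv_sym mop_Rs_in_U class_point_eq_iff by metis
    moreover have "mop (qs ! (i - 1)) (Rs n R (mop x qs)) \<in> U \<longleftrightarrow> mop x qs \<in> U"
      using mop_Rs_in_U_D(2) mop_Rs_in_U qi by blast
    ultimately show ?thesis
      using qs i by (simp add: fR_def class_value_def ps)
  qed
qed

lemma class_rep_mw: "class_rep (mw x y) = finter (class_rep x) (class_rep y)"
proof
  fix ps
  show "class_rep (mw x y) ps = finter (class_rep x) (class_rep y) ps"
  proof (cases "length ps = n \<and> set ps \<subseteq> class_points")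
    case False
    then show ?thesis
      by (simp add: finter_def class_rep_outside)
  next
    case True
    then obtain qs where qs: "length qs = n" "set qs \<subseteq> U" and ps: "ps = map class_point qs"
      using class_points_lists by blast
    then show ?thesis
      using class_rep_map_class_point mop_mw class_value_mw by (simp add: finter_def ps)
  qed
qed

lemma is_representation_class_rep: "is_representation n mop mw R class_points class_rep"
  unfolding is_representation_def
  by (simp add: is_nfun_class_rep class_rep_mop class_rep_R class_rep_mw)

lemma in_H_iff_U_equiv:
  assumes "h \<in> H"
  shows "y \<in> H \<longleftrightarrow> h \<approx> y"
proof
  assume "y \<in> H"
  then show "h \<approx> y"
    using assms mw_in_H H_subset_U by (auto simp: U_equiv_def)
next
  assume "h \<approx> y"
  then have d_in_U: "mw h y \<in> U"
    by (simp add: U_equiv_def)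
  have "mw h y = mop h (Rs n R (mw h y))"
    by (rule mw_eq_mop_Rs)
  also have "\<dots> \<in> H"
    using mop_Rs_in_H d_in_U assms by blast
  finally have "mop y (Rs n R (mw h y)) \<in> H"
    using mw_eq_mop_Rs[of y h] by (simp add: mw_commute)
  then show "y \<in> H"
    by (rule in_H_if_mop_in_H[OF length_Rs set_Rs_subset_H[OF d_in_U]])
qed

lemma mop_replicate_H_in_H:
  assumes "g \<in> H" "h \<in> H"
  shows "mop g (replicate n h) \<in> H"
proof -
  define c where "c = mw g h"
  have c_in_H: "c \<in> H"
    using assms mw_in_H by (simp add: c_def)
  have "mop c (replicate n c) = mw (mop g (replicate n c)) (mop h (replicate n c))"
    using mop_mw by (simp add: c_def)
  moreover have "mop c (replicate n c) \<in> H"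
    using mop_replicate_in_H c_in_H by simp
  ultimately have "mop g (replicate n c) \<approx> mop c (replicate n c)"
    using U_equiv_mw H_subset_U by auto
  then have "mop g (replicate n c) \<in> H"
    using in_H_iff_U_equiv \<open>mop c (replicate n c) \<in> H\<close> U_equiv_sym by blast
  moreover have "c \<approx> h"
    using in_H_iff_U_equiv c_in_H assms(2) by blast
  then have "list_all2 (\<approx>) (replicate n c) (replicate n h)"
    by (simp add: list_all2_conv_all_nth)
  then have "mop g (replicate n c) \<approx> mop g (replicate n h)"
    using mop_U_equiv \<open>mop g (replicate n c) \<in> H\<close> H_subset_U by auto
  then show ?thesis
    using in_H_iff_U_equiv[OF \<open>mop g (replicate n c) \<in> H\<close>] by blast
qed

lemma in_H_iff_mop_replicate_in_H:
  assumes "h \<in> H"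
  shows "g \<in> H \<longleftrightarrow> mop g (replicate n h) \<in> H"
proof
  assume "g \<in> H"
  then show "mop g (replicate n h) \<in> H"
    using mop_replicate_H_in_H assms by blast
next
  assume "mop g (replicate n h) \<in> H"
  moreover have "set (replicate n h) \<subseteq> H"
    using assms by auto
  ultimately show "g \<in> H"
    using in_H_if_mop_in_H[of "replicate n h" g] by simp
qed

lemma class_value_eq_class_point_iff:
  assumes "h \<in> H"
  shows "class_value x = Some (class_point h) \<longleftrightarrow> x \<in> H"
proof -
  have h_in_U: "h \<in> U"
    using assms H_subset_U by blast
  have "class_value x = Some (class_point h) \<longleftrightarrow> x \<in> U \<and> class_point x = class_point h"
    by (simp add: class_value_def)
  also have "\<dots> \<longleftrightarrow> x \<in> U \<and> x \<approx> h"
    using class_point_eq_iff h_in_U by blast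
  also have "\<dots> \<longleftrightarrow> x \<in> H"
    using in_H_iff_U_equiv[OF assms] U_equiv_in_U U_equiv_sym by blast
  finally show ?thesis .
qed

theorem is_stabilizer: "is_stabilizer TYPE('a list) n mop mw R H"
proof -
  obtain h where h: "h \<in> H"
    using H_nonempty by blast
  have "set (replicate n h) \<subseteq> U"
    using h H_subset_U by auto
  then have "class_rep g (replicate n (class_point h)) = Some (class_point h) \<longleftrightarrow> g \<in> H" for g
    using class_rep_map_class_point[of "replicate n h" g] class_value_eq_class_point_iff[OF h]
      in_H_iff_mop_replicate_in_H[OF h, of g]
    by simp
  then have "H = {g. class_rep g (replicate n (class_point h)) = Some (class_point h)}"
    by blast
  moreover have "class_point h \<in> class_points"
    using h H_subset_U by (auto simp: class_points_def)
  ultimately show ?thesis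
    unfolding is_stabilizer_def using H_nonempty is_representation_class_rep by blast
qed

end

theorem theorem4:
  fixes n :: nat
    and mop :: "'a \<Rightarrow> 'a list \<Rightarrow> 'a"
    and mw :: "'a \<Rightarrow> 'a \<Rightarrow> 'a"
    and R :: "nat \<Rightarrow> 'a \<Rightarrow> 'a"
    and H :: "'a set"
  assumes "1 \<le> n"
    and "functional_menger_wedge_algebra n mop mw R"
    and "H \<noteq> {}"
  defines "conds \<equiv>
      (quasi_stable n mop H \<and> wedge_stable mw H \<and> v_unitary n mop H) \<and>
      (\<exists>U. H \<subseteq> U \<and>
         (\<forall>i\<in>{1..n}. R i ` U \<subseteq> H \<and> R i ` (- U) \<subseteq> - U) \<and>
         (\<forall>x y. x \<in> U \<and> y \<in> H \<longrightarrow> mop y (Rs n R x) \<in> H) \<and>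
         (\<forall>x y. x \<in> U \<and> y \<in> U \<longrightarrow> mop y (Rs n R x) \<in> U))"
  shows "(is_stabilizer TYPE('b) n mop mw R H \<longrightarrow> conds) \<and>
         (conds \<longrightarrow> is_stabilizer TYPE('a list) n mop mw R H)"
proof -
  have conds_iff: "conds \<longleftrightarrow> (quasi_stable n mop H \<and> wedge_stable mw H \<and> v_unitary n mop H) \<and>
      (\<exists>U. stabilizer_domain n mop R H U)"
    unfolding conds_def stabilizer_domain_def ..
  show ?thesis
  proof (intro conjI impI)
    assume "is_stabilizer TYPE('b) n mop mw R H"
    then obtain A :: "'b set" and P a where
      "is_representation n mop mw R A P" "H = {g. P g (replicate n a) = Some a}"
      unfolding is_stabilizer_def by blast
    from point_stabilizer_conditions[OF this assms(3)] show conds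
      unfolding conds_iff by blast
  next
    assume conds
    then obtain U where "quasi_stable n mop H" "wedge_stable mw H" "v_unitary n mop H"
        "stabilizer_domain n mop R H U"
      unfolding conds_iff by blast
    with assms(1,2) interpret stabilizer_candidate n mop mw R H U
      by (simp add: stabilizer_candidate_def stabilizer_candidate_axioms_def menger_wedge_algebra_def)
    show "is_stabilizer TYPE('a list) n mop mw R H"
      by (rule is_stabilizer)
  qed
qed

end
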